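(* In a run of Algorithm 1 (described in the context), let $(\mathcal R_k,\delta_k)$ be the open leaf selected at the $k$-th iteration. If the overlap $\gamma$ is positive and the algorithm does not terminate sooner, then there is a $k$ such that $\mathcal R_k\subset\psi\mathbb B+\theta_o$ for some $\theta_o\in\Theta$.
   Context: Problem data: positive integers $p,n,m,d,l$; a convex cone $\mathcal K\subseteq\mathbb R^d$ (a product of convex cones); functions $f,g,h$ on $\mathbb R^p\times\mathbb R^n\times\mathbb R^m$ with values in $\mathbb R,\mathbb R^l,\mathbb R^d$, such that for each fixed $\delta\in\{0,1\}^m$, $(\theta,x)\mapsto f(\theta,x,\delta)$ is jointly convex and $(\theta,x)\mapsto g(\theta,x,\delta),h(\theta,x,\delta)$ are affine. $V^*_\delta(\theta)\in\mathbb R\cup\{+\infty\}$ is the optimal value of: minimize $f(\theta,x,\delta)$ over $x$ s.t. $g(\theta,x,\delta)=0$, $h(\theta,x,\delta)\in\mathcal K$; $\Theta^*_\delta$ is its feasible parameter set; $V^*=\min_\delta V^*_\delta$, $\Theta^*=\bigcup_\delta\Theta^*_\delta$. $\Theta\subseteq\Theta^*$ is a convex full-dimensional polytope, $\epsilon_{\mathrm a},\epsilon_{\mathrm r}$ are tolerances, $\mathbb B$ is the closed Euclidean unit ball. A commutation $\delta$ is $\epsilon$-suboptimal at $\theta$ if $V^*_\delta(\theta)-V^*(\theta)\le\max\{\epsilon_{\mathrm a},\epsilon_{\mathrm r}V^*(\theta)\}$, and in a set if at each of its points. $\Delta=\{\delta:\Theta^*_\delta\cap\Theta\ne\emptyset\}$.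 Overlap $\gamma$: the largest $\gamma\ge0$ such that for every $\theta\in\Theta$ some $\delta\in\Delta$ is $\epsilon$-suboptimal in $(\gamma\mathbb B+\theta)\cap\Theta$. Variability $\sigma_\delta$ of $\delta\in\Delta$: the largest $\sigma>0$ such that for every $\theta_o\in\Theta^*_\delta$, with $\Theta_\sigma=(\sigma\mathbb B+\theta_o)\cap\Theta^*_\delta$, one has $\max_{\Theta_\sigma}V^*_\delta-\min_{\Theta_\sigma}V^*_\delta<\max\{\epsilon_{\mathrm a},\epsilon_{\mathrm r}\min_{\Theta_\sigma}V^*\}$. Condition number $\psi=\min\{\gamma,\min_{\delta\in\Delta}\sigma_\delta\}$. For a simplex $\mathcal R$ with vertices $v_i$ and a commutation $\delta$, $\bar V_\delta(\theta)=\sum_i\alpha_iV^*_\delta(v_i)$ for barycentric coordinates $\alpha$ of $\theta\in\mathcal R$. Let $\mathcal P$ be the set of pairs $(\theta,\delta')$, $\theta\in\mathcal R$, $\delta'\ne\delta$, $\theta\in\Theta^*_{\delta'}$; $\bar e_{\mathrm a}(\mathcal R)=\sup_{\mathcal P}(\bar V_\delta(\theta)-V^*_{\delta'}(\theta))$, $\mu=\min_{\mathcal P}V^*_{\delta'}(\theta)$, $\bar e_{\mathrm r}(\mathcal R)=\bar e_{\mathrm a}(\mathcal R)/\mu$. Problem $D^{\mathcal R}_\delta$: maximize $\epsilon$ over $\theta\in\mathcal R$, $\epsilon\in\mathbb R$, $\delta'\in\{\delta''\ne\delta:\mathcal R\subseteq\Theta^*_{\delta''}\}$, subject to $\bar V_\delta(\theta)-\epsilon\ge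 V^*_{\delta'}(\theta)$ and $\epsilon\ge\max\{\epsilon_{\mathrm a},\epsilon_{\mathrm r}\mu\}$; $\delta^*$ is the $\delta'$-component of a maximizer. SPLIT$(\mathcal R)$: pick vertices $\bar v,\bar v'$ of $\mathcal R$ at maximal distance, $v_{\mathrm{mid}}=(\bar v+\bar v')/2$, return $\mathcal S_1=\mathrm{co}((\mathcal V(\mathcal R)\setminus\{\bar v\})\cup\{v_{\mathrm{mid}}\})$, $\mathcal S_2=\mathrm{co}((\mathcal V(\mathcal R)\setminus\{\bar v'\})\cup\{v_{\mathrm{mid}}\})$. Algorithm 1 (all subproblems solved exactly): Input is a finite binary tree whose leaves $(\mathcal R_i,\delta_i)$ are $p$-simplices with $\mathcal R_i\subseteq\Theta^*_{\delta_i}$ and $\bigcup_i\mathcal R_i=\Theta$; all leaves marked open. While an open leaf exists: take the most recently created open leaf $(\mathcal R,\delta)$ (one iteration). If $\mathcal P=\emptyset$, or $\bar e_{\mathrm a}(\mathcal R)\le\epsilon_{\mathrm a}$, or $\bar e_{\mathrm r}(\mathcal R)\le\epsilon_{\mathrm r}$: close the leaf. Otherwise solve $D^{\mathcal R}_\delta$. If feasible: if $\max_{\mathcal R}V^*_\delta-\min_{\mathcal R}V^*_\delta<\max\{\epsilon_{\mathrm a},\epsilon_{\mathrm r}\min_{\mathcal R}V^*\}$, replace the open leaf by $(\mathcal R,\delta^* )$; else add open children $(\mathcal S_1,\delta^* ),(\mathcal S_2,\delta^* )$ from SPLIT$(\mathcal R)$. If infeasible, add open children $(\mathcal S_1,\delta),(\mathcal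 S_2,\delta)$. *)

theory Defs
  imports "HOL-Analysis.Analysis"
begin

definition affine_map :: "('a::real_vector \<Rightarrow> 'b::real_vector) \<Rightarrow> bool" where
  "affine_map F \<longleftrightarrow> (\<exists>L c. linear L \<and> (\<forall>z. F z = L z + c))"

text \<open>Optimal value V*_delta(theta) (infimum over the empty set is +infinity).\<close>
definition Vopt ::
  "('p \<Rightarrow> 'x \<Rightarrow> 'd \<Rightarrow> real) \<Rightarrow> ('p \<Rightarrow> 'x \<Rightarrow> 'd \<Rightarrow> 'l::zero) \<Rightarrow>
   ('p \<Rightarrow> 'x \<Rightarrow> 'd \<Rightarrow> 'k) \<Rightarrow> 'k set \<Rightarrow> 'd \<Rightarrow> 'p \<Rightarrow> ereal" where
  "Vopt f g h K \<delta> \<theta> = (INF x\<in>{x. g \<theta> x \<delta> = 0 \<and> h \<theta> x \<delta> \<in> K}. ereal (f \<theta> x \<delta>))"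

definition feasset :: "('d \<Rightarrow> 'p \<Rightarrow> ereal) \<Rightarrow> 'd \<Rightarrow> 'p set" where
  "feasset V \<delta> = {\<theta>. V \<delta> \<theta> < \<infinity>}"

definition Vstar :: "('d::finite \<Rightarrow> 'p \<Rightarrow> ereal) \<Rightarrow> 'p \<Rightarrow> ereal" where
  "Vstar V \<theta> = Min (range (\<lambda>\<delta>. V \<delta> \<theta>))"

definition tol :: "real \<Rightarrow> real \<Rightarrow> ereal \<Rightarrow> ereal" where
  "tol ea er v = max (ereal ea) (ereal er * v)"

definition subopt :: "('d::finite \<Rightarrow> 'p \<Rightarrow> ereal) \<Rightarrow> real \<Rightarrow> real \<Rightarrow> 'd \<Rightarrow> 'p \<Rightarrow> bool" where
  "subopt V ea er \<delta> \<theta> \<longleftrightarrow> V \<delta> \<theta> - Vstar V \<theta> \<le> tol ea er (Vstar V \<theta>)"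

definition subopt_on :: "('d::finite \<Rightarrow> 'p \<Rightarrow> ereal) \<Rightarrow> real \<Rightarrow> real \<Rightarrow> 'd \<Rightarrow> 'p set \<Rightarrow> bool" where
  "subopt_on V ea er \<delta> S \<longleftrightarrow> (\<forall>\<theta>\<in>S. subopt V ea er \<delta> \<theta>)"

definition Delta :: "('d \<Rightarrow> 'p \<Rightarrow> ereal) \<Rightarrow> 'p set \<Rightarrow> 'd set" where
  "Delta V \<Theta> = {\<delta>. feasset V \<delta> \<inter> \<Theta> \<noteq> {}}"

definition overlap_prop ::
  "('d::finite \<Rightarrow> 'p::metric_space \<Rightarrow> ereal) \<Rightarrow> real \<Rightarrow> real \<Rightarrow> 'p set \<Rightarrow> real \<Rightarrow> bool" where
  "overlap_prop V ea er \<Theta> \<gamma> \<longleftrightarrow>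
     (\<forall>\<theta>\<in>\<Theta>. \<exists>\<delta>\<in>Delta V \<Theta>. subopt_on V ea er \<delta> (cball \<theta> \<gamma> \<inter> \<Theta>))"

text \<open>The largest such gamma (as a supremum in the extended reals; +infinity if unbounded).\<close>
definition overlap ::
  "('d::finite \<Rightarrow> 'p::metric_space \<Rightarrow> ereal) \<Rightarrow> real \<Rightarrow> real \<Rightarrow> 'p set \<Rightarrow> ereal" where
  "overlap V ea er \<Theta> = Sup (ereal ` {\<gamma>. \<gamma> \<ge> 0 \<and> overlap_prop V ea er \<Theta> \<gamma>})"

definition var_prop ::
  "('d::finite \<Rightarrow> 'p::metric_space \<Rightarrow> ereal) \<Rightarrow> real \<Rightarrow> real \<Rightarrow> 'd \<Rightarrow> real \<Rightarrow> bool" where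
  "var_prop V ea er \<delta> \<sigma> \<longleftrightarrow>
     (\<forall>\<theta>o\<in>feasset V \<delta>. let S = cball \<theta>o \<sigma> \<inter> feasset V \<delta> in
        (SUP \<theta>\<in>S. V \<delta> \<theta>) - (INF \<theta>\<in>S. V \<delta> \<theta>) < tol ea er (INF \<theta>\<in>S. Vstar V \<theta>))"

definition variability ::
  "('d::finite \<Rightarrow> 'p::metric_space \<Rightarrow> ereal) \<Rightarrow> real \<Rightarrow> real \<Rightarrow> 'd \<Rightarrow> ereal" where
  "variability V ea er \<delta> = Sup (ereal ` {\<sigma>. \<sigma> > 0 \<and> var_prop V ea er \<delta> \<sigma>})"

definition condnum ::
  "('d::finite \<Rightarrow> 'p::metric_space \<Rightarrow> ereal) \<Rightarrow> real \<Rightarrow> real \<Rightarrow> 'p set \<Rightarrow> ereal" where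
  "condnum V ea er \<Theta> =
     min (overlap V ea er \<Theta>) (INF \<delta>\<in>Delta V \<Theta>. variability V ea er \<delta>)"

text \<open>Closed ball with extended-real radius (the whole space for radius +infinity).\<close>
definition ecball :: "'p::metric_space \<Rightarrow> ereal \<Rightarrow> 'p set" where
  "ecball c r = {\<theta>. ereal (dist c \<theta>) \<le> r}"

definition bary :: "'p::real_vector set \<Rightarrow> 'p \<Rightarrow> 'p \<Rightarrow> real" where
  "bary Vs \<theta> = (THE \<alpha>. (\<forall>v. v \<notin> Vs \<longrightarrow> \<alpha> v = 0) \<and> (\<forall>v\<in>Vs. \<alpha> v \<ge> 0) \<and>
                       sum \<alpha> Vs = 1 \<and> (\<Sum>v\<in>Vs. \<alpha> v *\<^sub>R v) = \<theta>)"

definition Vbar :: "('d \<Rightarrow> 'p::real_vector \<Rightarrow> ereal) \<Rightarrow> 'd \<Rightarrow> 'p set \<Rightarrow> 'p \<Rightarrow> ereal" where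
  "Vbar V \<delta> Vs \<theta> = (\<Sum>v\<in>Vs. ereal (bary Vs \<theta> v) * V \<delta> v)"

definition Ppairs :: "('d \<Rightarrow> 'p::real_vector \<Rightarrow> ereal) \<Rightarrow> 'd \<Rightarrow> 'p set \<Rightarrow> ('p \<times> 'd) set" where
  "Ppairs V \<delta> Vs = {(\<theta>, \<delta>'). \<theta> \<in> convex hull Vs \<and> \<delta>' \<noteq> \<delta> \<and> \<theta> \<in> feasset V \<delta>'}"

definition ea_bar :: "('d \<Rightarrow> 'p::real_vector \<Rightarrow> ereal) \<Rightarrow> 'd \<Rightarrow> 'p set \<Rightarrow> ereal" where
  "ea_bar V \<delta> Vs = (SUP (\<theta>, \<delta>')\<in>Ppairs V \<delta> Vs. Vbar V \<delta> Vs \<theta> - V \<delta>' \<theta>)"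

definition mu :: "('d \<Rightarrow> 'p::real_vector \<Rightarrow> ereal) \<Rightarrow> 'd \<Rightarrow> 'p set \<Rightarrow> ereal" where
  "mu V \<delta> Vs = (INF (\<theta>, \<delta>')\<in>Ppairs V \<delta> Vs. V \<delta>' \<theta>)"

definition er_bar :: "('d \<Rightarrow> 'p::real_vector \<Rightarrow> ereal) \<Rightarrow> 'd \<Rightarrow> 'p set \<Rightarrow> ereal" where
  "er_bar V \<delta> Vs = ea_bar V \<delta> Vs / mu V \<delta> Vs"

definition closes :: "('d \<Rightarrow> 'p::real_vector \<Rightarrow> ereal) \<Rightarrow> real \<Rightarrow> real \<Rightarrow> 'd \<Rightarrow> 'p set \<Rightarrow> bool" where
  "closes V ea er \<delta> Vs \<longleftrightarrow>
     Ppairs V \<delta> Vs = {} \<or> ea_bar V \<delta> Vs \<le> ereal ea \<or> er_bar V \<delta> Vs \<le> ereal er"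

definition D_feas ::
  "('d \<Rightarrow> 'p::real_vector \<Rightarrow> ereal) \<Rightarrow> real \<Rightarrow> real \<Rightarrow> 'd \<Rightarrow> 'p set \<Rightarrow> 'p \<Rightarrow> real \<Rightarrow> 'd \<Rightarrow> bool" where
  "D_feas V ea er \<delta> Vs \<theta> \<epsilon> \<delta>' \<longleftrightarrow>
     \<theta> \<in> convex hull Vs \<and> \<delta>' \<noteq> \<delta> \<and> convex hull Vs \<subseteq> feasset V \<delta>' \<and>
     Vbar V \<delta> Vs \<theta> - ereal \<epsilon> \<ge> V \<delta>' \<theta> \<and> ereal \<epsilon> \<ge> tol ea er (mu V \<delta> Vs)"

definition D_max ::
  "('d \<Rightarrow> 'p::real_vector \<Rightarrow> ereal) \<Rightarrow> real \<Rightarrow> real \<Rightarrow> 'd \<Rightarrow> 'p set \<Rightarrow> 'p \<Rightarrow> real \<Rightarrow> 'd \<Rightarrow> bool" where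
  "D_max V ea er \<delta> Vs \<theta> \<epsilon> \<delta>' \<longleftrightarrow>
     D_feas V ea er \<delta> Vs \<theta> \<epsilon> \<delta>' \<and>
     (\<forall>\<theta>2 \<epsilon>2 \<delta>2. D_feas V ea er \<delta> Vs \<theta>2 \<epsilon>2 \<delta>2 \<longrightarrow> \<epsilon>2 \<le> \<epsilon>)"

definition small_var ::
  "('d::finite \<Rightarrow> 'p::real_vector \<Rightarrow> ereal) \<Rightarrow> real \<Rightarrow> real \<Rightarrow> 'd \<Rightarrow> 'p set \<Rightarrow> bool" where
  "small_var V ea er \<delta> Vs \<longleftrightarrow>
     (SUP \<theta>\<in>convex hull Vs. V \<delta> \<theta>) - (INF \<theta>\<in>convex hull Vs. V \<delta> \<theta>)
       < tol ea er (INF \<theta>\<in>convex hull Vs. Vstar V \<theta>)"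

definition split_ok :: "'p::real_normed_vector set \<Rightarrow> 'p \<Rightarrow> 'p \<Rightarrow> bool" where
  "split_ok Vs a b \<longleftrightarrow> a \<in> Vs \<and> b \<in> Vs \<and> (\<forall>u\<in>Vs. \<forall>w\<in>Vs. dist u w \<le> dist a b)"

definition split1 :: "'p::real_normed_vector set \<Rightarrow> 'p \<Rightarrow> 'p \<Rightarrow> 'p set" where
  "split1 Vs a b = insert ((1/2) *\<^sub>R (a + b)) (Vs - {a})"

definition split2 :: "'p::real_normed_vector set \<Rightarrow> 'p \<Rightarrow> 'p \<Rightarrow> 'p set" where
  "split2 Vs a b = insert ((1/2) *\<^sub>R (a + b)) (Vs - {b})"

text \<open>A leaf is a simplex (given by its vertex set) together with a commutation.
  The state of the algorithm is the stack of open leaves, the most recently created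
  one on top (head of the list).\<close>
type_synonym ('p, 'd) leaf = "'p set \<times> 'd"

definition push_children :: "'p::real_normed_vector set \<Rightarrow> 'p \<Rightarrow> 'p \<Rightarrow> 'd \<Rightarrow>
    ('p, 'd) leaf list \<Rightarrow> ('p, 'd) leaf list \<Rightarrow> bool" where
  "push_children Vs a b d rest L' \<longleftrightarrow>
     L' = (split1 Vs a b, d) # (split2 Vs a b, d) # rest \<or>
     L' = (split2 Vs a b, d) # (split1 Vs a b, d) # rest"

definition alg_step ::
  "('d::finite \<Rightarrow> 'p::real_normed_vector \<Rightarrow> ereal) \<Rightarrow> real \<Rightarrow> real \<Rightarrow>
   ('p, 'd) leaf list \<Rightarrow> ('p, 'd) leaf list \<Rightarrow> bool" where
  "alg_step V ea er L L' \<longleftrightarrow>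
     (\<exists>Vs \<delta> rest. L = (Vs, \<delta>) # rest \<and>
       ((closes V ea er \<delta> Vs \<and> L' = rest) \<or>
        (\<not> closes V ea er \<delta> Vs \<and> (\<exists>\<theta> \<epsilon> \<delta>'. D_feas V ea er \<delta> Vs \<theta> \<epsilon> \<delta>') \<and>
          (\<exists>\<theta> \<epsilon> \<delta>s. D_max V ea er \<delta> Vs \<theta> \<epsilon> \<delta>s \<and>
             (if small_var V ea er \<delta> Vs then L' = (Vs, \<delta>s) # rest
              else (\<exists>a b. split_ok Vs a b \<and> push_children Vs a b \<delta>s rest L')))) \<or>
        (\<not> closes V ea er \<delta> Vs \<and> \<not> (\<exists>\<theta> \<epsilon> \<delta>'. D_feas V ea er \<delta> Vs \<theta> \<epsilon> \<delta>') \<and>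
          (\<exists>a b. split_ok Vs a b \<and> push_children Vs a b \<delta> rest L'))))"

definition init_ok ::
  "('d \<Rightarrow> 'p::euclidean_space \<Rightarrow> ereal) \<Rightarrow> 'p set \<Rightarrow> ('p, 'd) leaf list \<Rightarrow> bool" where
  "init_ok V \<Theta> L \<longleftrightarrow>
     (\<forall>(Vs, \<delta>)\<in>set L. \<not> affine_dependent Vs \<and> card Vs = DIM('p) + 1 \<and>
        convex hull Vs \<subseteq> feasset V \<delta>) \<and>
     (\<Union>(Vs, \<delta>)\<in>set L. convex hull Vs) = \<Theta>"

end

(* Suppose no selected simplex lies in a ball of radius \<psi> about a point of \<Theta>
   (\<psi> > 0, as \<gamma> > 0 and the finitely many \<sigma>_\<delta> are positive), and fix a real
   0 < \<psi>' \<le> \<psi>.  Then every simplex that is split has its longest edge longer than \<psi>'.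
   Splitting at the midpoint of the longest edge lowers
   Phi_k(S) = sum over vertex pairs u, w of |u - w|^(2k) by at least \<psi>'^(2k) once
   (3/4)^k \<le> 1/(2p), so both children have smaller rank ceiling(Phi_k / \<psi>'^(2k)) than their
   parent.  Hence the sum of 3^rank over the stack of open leaves drops whenever a leaf is
   closed or split, and is unchanged when only its commutation is replaced.  So from some
   iteration on, the algorithm keeps replacing the commutation of one fixed simplex R.  But
   two consecutive replacements \<delta> \<rightarrow> \<delta>* \<rightarrow> ... force max_R V*_\<delta>* < max_R V*_\<delta>, by the
   constraint of D and the variation test, which cannot go on forever with finitely many
   commutations. *)
theory Submission
  imports Defs
begin

section \<open>Splitting a simplex at its longest edge\<close>

lemma split1_eq_midpoint: "split1 Vs a b = insert (midpoint a b) (Vs - {a})"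
  unfolding split1_def midpoint_def by simp

lemma split2_eq_split1: "split2 Vs a b = split1 Vs b a"
  unfolding split1_def split2_def by (simp add: add.commute)

lemma split_ok_commute: "split_ok Vs a b \<Longrightarrow> split_ok Vs b a"
  unfolding split_ok_def by (simp add: dist_commute)

lemma convex_hull_subset_cball_split_ok:
  assumes "split_ok Vs a b"
  shows "convex hull Vs \<subseteq> cball a (dist a b)"
  using assms unfolding split_ok_def by (intro hull_minimal) (auto simp: mem_cball)

lemma dist_midpoint_power2:
  fixes a b w :: "'a::real_inner"
  shows "(dist (midpoint a b) w)\<^sup>2 = ((dist a w)\<^sup>2 + (dist b w)\<^sup>2) / 2 - (dist a b)\<^sup>2 / 4"
proof -
  have m: "midpoint a b - w = (1/2) *\<^sub>R ((a - w) + (b - w))"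
    unfolding midpoint_def by (simp add: algebra_simps flip: scaleR_add_left)
  have ab: "a - b = (a - w) - (b - w)" by simp
  have ba: "b \<bullet> a = a \<bullet> b" by (rule inner_commute)
  show ?thesis
    unfolding dist_norm m ab
    by (simp add: power2_norm_eq_inner inner_simps algebra_simps ba)
      (simp add: field_simps)
qed

lemma dist_midpoint_power_le:
  fixes a b w :: "'a::real_inner"
  assumes "dist a w \<le> dist a b" "dist b w \<le> dist a b"
  shows "(dist (midpoint a b) w) ^ (2 * k) \<le> (3/4) ^ k * (dist a b) ^ (2 * k)"
proof -
  have "(dist a w)\<^sup>2 \<le> (dist a b)\<^sup>2" "(dist b w)\<^sup>2 \<le> (dist a b)\<^sup>2"
    using assms by (simp_all add: power_mono)
  moreover have "(dist (midpoint a b) w)\<^sup>2 = ((dist a w)\<^sup>2 + (dist b w)\<^sup>2) / 2 - (dist a b)\<^sup>2 / 4"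
    by (rule dist_midpoint_power2)
  ultimately have "(dist (midpoint a b) w)\<^sup>2 \<le> (3/4) * (dist a b)\<^sup>2" by argo
  then have "((dist (midpoint a b) w)\<^sup>2) ^ k \<le> ((3/4) * (dist a b)\<^sup>2) ^ k"
    by (intro power_mono) auto
  then show ?thesis by (simp only: power_mult power_mult_distrib)
qed

lemma convex_hull_split1_subset:
  assumes "a \<in> Vs" "b \<in> Vs"
  shows "convex hull (split1 Vs a b) \<subseteq> convex hull Vs"
proof -
  have "midpoint a b \<in> convex hull Vs"
    using assms by (intro midpoints_in_convex_hull hull_inc)
  then have "split1 Vs a b \<subseteq> convex hull Vs"
    unfolding split1_eq_midpoint using hull_subset[of Vs convex] by blast
  then show ?thesis by (simp add: hull_minimal)
qed

lemma affine_independent_split1: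
  fixes Vs :: "'a::euclidean_space set"
  assumes fin: "finite Vs" and ind: "\<not> affine_dependent Vs" and ab: "a \<in> Vs" "b \<in> Vs"
  shows "\<not> affine_dependent (split1 Vs a b)"
proof (cases "a = b \<or> midpoint a b \<in> Vs - {a}")
  case True
  then have "split1 Vs a b \<subseteq> Vs" unfolding split1_eq_midpoint using ab by auto
  then show ?thesis using affine_independent_subset ind by blast
next
  case False
  let ?S = "split1 Vs a b"
  have "a \<noteq> b" "midpoint a b \<notin> Vs" using False by auto
  have S: "?S = insert (midpoint a b) (Vs - {a})" by (rule split1_eq_midpoint)
  have "card Vs > 0" using fin ab by (auto simp: card_gt_0_iff)
  then have card_eq: "card ?S = card Vs"
    using S \<open>midpoint a b \<notin> Vs\<close> fin ab by simp
  have "?S \<subseteq> affine hull Vs"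
  proof -
    have "midpoint a b \<in> affine hull Vs"
      unfolding midpoint_def scaleR_add_right inverse_eq_divide
      by (intro mem_affine[OF affine_affine_hull]) (use ab in \<open>auto intro: hull_inc\<close>)
    then show ?thesis unfolding S using hull_subset[of Vs affine] by blast
  qed
  moreover have "Vs \<subseteq> affine hull ?S"
  proof -
    have "b \<in> ?S" "midpoint a b \<in> ?S" using S \<open>a \<noteq> b\<close> ab by auto
    then have "2 *\<^sub>R midpoint a b + (-1) *\<^sub>R b \<in> affine hull ?S"
      by (intro mem_affine[OF affine_affine_hull]) (auto intro: hull_inc)
    moreover have "2 *\<^sub>R midpoint a b + (-1) *\<^sub>R b = a"
      unfolding midpoint_def by (simp add: algebra_simps)
    ultimately show ?thesis using S hull_subset[of ?S affine] by auto
  qed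
  ultimately have "affine hull ?S = affine hull Vs"
    by (intro subset_antisym hull_minimal) (auto simp: affine_affine_hull)
  then have "aff_dim ?S = aff_dim Vs" by (metis aff_dim_affine_hull)
  moreover have "aff_dim Vs = int (card Vs) - 1" using ind affine_independent_iff_card by blast
  ultimately show ?thesis
    unfolding affine_independent_iff_card using fin S card_eq by simp
qed

lemma card_le_Suc_DIM_if_affine_independent:
  fixes S :: "'p::euclidean_space set"
  assumes "\<not> affine_dependent S"
  shows "card S \<le> DIM('p) + 1"
proof -
  have "aff_dim S = int (card S) - 1" using assms affine_independent_iff_card by blast
  then show ?thesis using aff_dim_le_DIM[of S] by linarith
qed

section \<open>A potential that drops when a long edge is split\<close>

definition vertex_potential :: "nat \<Rightarrow> 'a::metric_space set \<Rightarrow> real" where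
  "vertex_potential k S = (\<Sum>u\<in>S. \<Sum>w\<in>S. (dist u w) ^ (2 * k))"

lemma vertex_potential_nonneg: "vertex_potential k S \<ge> 0"
  unfolding vertex_potential_def by (intro sum_nonneg) auto

lemma vertex_potential_insert:
  assumes "finite T" "m \<notin> T" "k \<ge> 1"
  shows "vertex_potential k (insert m T) = vertex_potential k T + 2 * (\<Sum>w\<in>T. (dist m w) ^ (2 * k))"
proof -
  have "(dist m m) ^ (2 * k) = 0" using assms(3) by simp
  then have "vertex_potential k (insert m T) =
      (\<Sum>w\<in>T. (dist m w) ^ (2 * k)) + (\<Sum>u\<in>T. (dist u m) ^ (2 * k) + (\<Sum>w\<in>T. (dist u w) ^ (2 * k)))"
    unfolding vertex_potential_def using assms by simp
  then show ?thesis
    unfolding vertex_potential_def sum.distrib by (simp add: dist_commute)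
qed

text \<open>All other vertices are within distance \<open>\<surd>3/2 \<cdot> dist a b\<close> of the midpoint, so
  for \<open>k\<close> large compared with the number of vertices the new edges cannot make up
  for the loss of the longest edge.\<close>
lemma vertex_potential_split1:
  fixes Vs :: "'a::real_inner set"
  assumes fin: "finite Vs" and ab: "a \<in> Vs" "b \<in> Vs" "a \<noteq> b"
    and longest: "\<forall>u\<in>Vs. \<forall>w\<in>Vs. dist u w \<le> dist a b" and k: "k \<ge> 1"
    and k_large: "real (card Vs - 1) * (3/4) ^ k \<le> 1/2"
  shows "vertex_potential k (split1 Vs a b) \<le> vertex_potential k Vs - (dist a b) ^ (2 * k)"
proof -
  define T where "T = Vs - {a}"
  define m where "m = midpoint a b"
  define D where "D = dist a b"
  have finT: "finite T" and bT: "b \<in> T" and "a \<notin> T" and Vs_eq: "Vs = insert a T"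
    using fin ab unfolding T_def by auto
  have card_T: "card T = card Vs - 1" using ab fin T_def by simp
  have old: "vertex_potential k Vs = vertex_potential k T + 2 * (\<Sum>w\<in>T. (dist a w) ^ (2 * k))"
    using vertex_potential_insert[OF finT \<open>a \<notin> T\<close> k] Vs_eq by simp
  have "D ^ (2 * k) \<le> (\<Sum>w\<in>T. (dist a w) ^ (2 * k))"
    using member_le_sum[OF bT, of "\<lambda>w. (dist a w) ^ (2 * k)"] finT D_def by simp
  moreover have "(dist m w) ^ (2 * k) \<le> (3/4) ^ k * D ^ (2 * k)" if "w \<in> T" for w
    using that longest ab unfolding m_def D_def T_def by (intro dist_midpoint_power_le) auto
  then have "(\<Sum>w\<in>T. (dist m w) ^ (2 * k)) \<le> real (card T) * ((3/4) ^ k * D ^ (2 * k))"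
    using sum_mono[of T _ "\<lambda>_. (3/4) ^ k * D ^ (2 * k)"] by simp
  moreover have "real (card T) * ((3/4) ^ k * D ^ (2 * k)) \<le> (1/2) * D ^ (2 * k)"
    using mult_right_mono[OF k_large, of "D ^ (2 * k)"] card_T by (simp add: mult.assoc)
  moreover have "vertex_potential k (split1 Vs a b) \<le> vertex_potential k T + 2 * (\<Sum>w\<in>T. (dist m w) ^ (2 * k))"
  proof (cases "m \<in> T")
    case True
    then have "split1 Vs a b = T" unfolding split1_eq_midpoint m_def[symmetric] T_def by auto
    then show ?thesis by (simp add: sum_nonneg)
  next
    case False
    have "split1 Vs a b = insert m T" unfolding split1_eq_midpoint m_def[symmetric] T_def ..
    then show ?thesis using vertex_potential_insert[OF finT False k] by simp
  qed
  ultimately show ?thesis using old unfolding D_def by linarith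
qed

definition potential_rank :: "real \<Rightarrow> nat \<Rightarrow> 'a::metric_space set \<Rightarrow> nat" where
  "potential_rank c k S = nat \<lceil>vertex_potential k S / c\<rceil>"

lemma potential_rank_less:
  assumes c: "c > 0" and drop: "vertex_potential k S' \<le> vertex_potential k S - c"
  shows "potential_rank c k S' < potential_rank c k S"
proof -
  have "vertex_potential k S' / c \<le> vertex_potential k S / c - 1"
    using drop c by (simp add: field_simps)
  then have "\<lceil>vertex_potential k S' / c\<rceil> \<le> \<lceil>vertex_potential k S / c\<rceil> - 1"
    by (metis ceiling_diff_one ceiling_mono)
  moreover have "vertex_potential k S' / c \<ge> 0"
    using vertex_potential_nonneg[of k S'] c by simp
  ultimately show ?thesis unfolding potential_rank_def by linarith
qed

lemma exists_split_exponent: "\<exists>k\<ge>1. real n * (3/4) ^ k \<le> (1/2::real)"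
proof -
  obtain j where j: "(3/4::real) ^ j < 1 / (2 * (real n + 1))"
    using real_arch_pow_inv[of "1 / (2 * (real n + 1))" "3/4"] by auto
  have "real n * (3/4) ^ Suc j \<le> (real n + 1) * (3/4::real) ^ j"
    by (intro mult_mono) auto
  also have "\<dots> \<le> (real n + 1) * (1 / (2 * (real n + 1)))"
    using j by (intro mult_left_mono) auto
  also have "\<dots> = 1/2" by simp
  finally show ?thesis by (intro exI[of _ "Suc j"]) simp
qed

lemma potential_rank_split_less:
  fixes Vs :: "'p::euclidean_space set"
  assumes fin: "finite Vs" and ind: "\<not> affine_dependent Vs"
    and split: "split_ok Vs a b" and long: "\<psi> < dist a b" and \<psi>: "\<psi> > 0"
    and k: "k \<ge> 1" and k_large: "real DIM('p) * (3/4) ^ k \<le> 1/2"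
  shows "potential_rank (\<psi> ^ (2 * k)) k (split1 Vs a b) < potential_rank (\<psi> ^ (2 * k)) k Vs"
proof (rule potential_rank_less)
  have ab: "a \<in> Vs" "b \<in> Vs" "a \<noteq> b" using split long \<psi> unfolding split_ok_def by force+
  have longest: "\<forall>u\<in>Vs. \<forall>w\<in>Vs. dist u w \<le> dist a b" using split unfolding split_ok_def by blast
  have "real (card Vs - 1) * (3/4) ^ k \<le> real DIM('p) * (3/4) ^ k"
    using card_le_Suc_DIM_if_affine_independent[OF ind] by (intro mult_right_mono) auto
  then have "real (card Vs - 1) * (3/4) ^ k \<le> 1/2" using k_large by linarith
  then have "vertex_potential k (split1 Vs a b) \<le> vertex_potential k Vs - (dist a b) ^ (2 * k)"
    by (rule vertex_potential_split1[OF fin ab longest k])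
  moreover have "\<psi> ^ (2 * k) \<le> (dist a b) ^ (2 * k)"
    using long \<psi> by (intro power_mono) simp_all
  ultimately show "vertex_potential k (split1 Vs a b) \<le> vertex_potential k Vs - \<psi> ^ (2 * k)"
    by linarith
  show "\<psi> ^ (2 * k) > 0" using \<psi> by simp
qed

lemma three_power_add_less:
  fixes r1 r2 r :: nat
  assumes "r1 < r" "r2 < r"
  shows "(3::nat) ^ r1 + 3 ^ r2 < 3 ^ r"
proof -
  obtain q where q: "r = Suc q" using assms by (cases r) auto
  have "(3::nat) ^ r1 \<le> 3 ^ q" "(3::nat) ^ r2 \<le> 3 ^ q"
    using assms q by (auto intro: power_increasing)
  moreover have "(3::nat) ^ r = 3 * 3 ^ q" "(3::nat) ^ q > 0" using q by simp_all
  ultimately show ?thesis by linarith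
qed

section \<open>Interpolated values on a simplex\<close>

lemma affine_independent_weights_unique:
  fixes Vs :: "'a::real_vector set"
  assumes fin: "finite Vs" and ind: "\<not> affine_dependent Vs"
    and supp: "\<forall>v. v \<notin> Vs \<longrightarrow> \<alpha> v = 0" "\<forall>v. v \<notin> Vs \<longrightarrow> \<beta> v = 0"
    and sum_eq: "sum \<alpha> Vs = sum \<beta> Vs" and comb_eq: "(\<Sum>v\<in>Vs. \<alpha> v *\<^sub>R v) = (\<Sum>v\<in>Vs. \<beta> v *\<^sub>R v)"
  shows "\<alpha> = \<beta>"
proof
  fix v
  have "sum (\<lambda>x. \<alpha> x - \<beta> x) Vs = 0" using sum_eq by (simp add: sum_subtractf)
  moreover have "(\<Sum>x\<in>Vs. (\<alpha> x - \<beta> x) *\<^sub>R x) = 0"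
    using comb_eq by (simp add: scaleR_diff_left sum_subtractf)
  ultimately have "\<forall>x\<in>Vs. \<alpha> x - \<beta> x = 0"
    using ind affine_dependent_explicit_finite[OF fin] by blast
  then show "\<alpha> v = \<beta> v" using supp by (cases "v \<in> Vs") auto
qed

lemma bary_convex_weights:
  fixes Vs :: "'a::real_vector set"
  assumes fin: "finite Vs" and ind: "\<not> affine_dependent Vs" and \<theta>: "\<theta> \<in> convex hull Vs"
  shows "(\<forall>v\<in>Vs. bary Vs \<theta> v \<ge> 0) \<and> sum (bary Vs \<theta>) Vs = 1"
proof -
  let ?P = "\<lambda>\<alpha>. (\<forall>v. v \<notin> Vs \<longrightarrow> \<alpha> v = 0) \<and> (\<forall>v\<in>Vs. \<alpha> v \<ge> 0) \<and>
                 sum \<alpha> Vs = 1 \<and> (\<Sum>v\<in>Vs. \<alpha> v *\<^sub>R v) = \<theta>"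
  obtain u where u: "\<forall>x\<in>Vs. 0 \<le> u x" "sum u Vs = 1" "(\<Sum>x\<in>Vs. u x *\<^sub>R x) = \<theta>"
    using \<theta> convex_hull_finite[OF fin] by auto
  define \<alpha> where "\<alpha> = (\<lambda>v. if v \<in> Vs then u v else 0)"
  have "sum \<alpha> Vs = sum u Vs" "(\<Sum>v\<in>Vs. \<alpha> v *\<^sub>R v) = (\<Sum>v\<in>Vs. u v *\<^sub>R v)"
    unfolding \<alpha>_def by (auto intro: sum.cong)
  then have "?P \<alpha>" using u by (auto simp: \<alpha>_def)
  moreover have "\<beta> = \<alpha>" if "?P \<beta>" for \<beta>
    using affine_independent_weights_unique[OF fin ind] that \<open>?P \<alpha>\<close> by simp
  ultimately have "?P (bary Vs \<theta>)" unfolding bary_def by (rule theI)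
  then show ?thesis by simp
qed

lemma Vbar_le_vertex_bound:
  fixes Vs :: "'a::real_vector set"
  assumes fin: "finite Vs" and ind: "\<not> affine_dependent Vs" and th: "\<theta> \<in> convex hull Vs"
    and le: "\<forall>v\<in>Vs. V \<delta> v \<le> ereal A"
  shows "Vbar V \<delta> Vs \<theta> \<le> ereal A"
proof -
  have bp: "\<forall>v\<in>Vs. bary Vs \<theta> v \<ge> 0" "sum (bary Vs \<theta>) Vs = 1"
    using bary_convex_weights[OF fin ind th] by auto
  have "Vbar V \<delta> Vs \<theta> \<le> (\<Sum>v\<in>Vs. ereal (bary Vs \<theta> v) * ereal A)"
    unfolding Vbar_def
    by (intro sum_mono ereal_mult_left_mono) (use bp le in auto)
  also have "\<dots> = ereal (\<Sum>v\<in>Vs. bary Vs \<theta> v * A)" by (simp add: sum_ereal)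
  also have "\<dots> = ereal A" using bp by (simp add: sum_distrib_right[symmetric])
  finally show ?thesis .
qed

section \<open>Replacing the commutation of a leaf\<close>

lemma Vstar_le: "Vstar V \<theta> \<le> V \<delta> \<theta>"
  unfolding Vstar_def by (rule Min_le) auto

lemma Vstar_attained: "\<exists>\<delta>. Vstar V \<theta> = V \<delta> \<theta>"
proof -
  have "Vstar V \<theta> \<in> range (\<lambda>\<delta>. V \<delta> \<theta>)" unfolding Vstar_def by (rule Min_in) auto
  then show ?thesis by auto
qed

lemma D_feas_le_ea_bar:
  assumes D: "D_feas V ea er \<delta> Vs \<theta> \<epsilon> \<delta>s" and not_minf: "V \<delta>s \<theta> \<noteq> -\<infinity>"
  shows "ereal \<epsilon> \<le> ea_bar V \<delta> Vs"
proof -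
  have th: "\<theta> \<in> convex hull Vs" "\<delta>s \<noteq> \<delta>" "convex hull Vs \<subseteq> feasset V \<delta>s"
    "V \<delta>s \<theta> \<le> Vbar V \<delta> Vs \<theta> - ereal \<epsilon>"
    using D unfolding D_feas_def by auto
  then have fin: "V \<delta>s \<theta> < \<infinity>" unfolding feasset_def by auto
  have P: "(\<theta>, \<delta>s) \<in> Ppairs V \<delta> Vs" unfolding Ppairs_def using th fin feasset_def by auto
  have "ereal \<epsilon> \<le> Vbar V \<delta> Vs \<theta> - V \<delta>s \<theta>"
    using th(4) fin not_minf by (cases "Vbar V \<delta> Vs \<theta>"; cases "V \<delta>s \<theta>") auto
  also have "\<dots> \<le> ea_bar V \<delta> Vs"
    unfolding ea_bar_def using P by (auto intro!: SUP_upper2[OF P])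
  finally show ?thesis .
qed

text \<open>With a negative relative tolerance, a non-closing leaf with a feasible problem
  \<open>D\<close> forces \<open>\<mu> \<ge> 0\<close>: otherwise \<open>er \<cdot> \<mu> \<le> \<epsilon> \<le> ea_bar\<close> would give \<open>er_bar \<le> er\<close>.\<close>
lemma mu_nonneg_if_not_closes:
  assumes er: "er < 0" and not_closes: "\<not> closes V ea er \<delta> Vs"
    and D: "D_feas V ea er \<delta> Vs \<theta> \<epsilon> \<delta>s" and not_minf: "V \<delta>s \<theta> \<noteq> -\<infinity>"
  shows "mu V \<delta> Vs \<ge> 0"
proof (rule ccontr)
  assume "\<not> mu V \<delta> Vs \<ge> 0"
  then have neg: "mu V \<delta> Vs < 0" by simp
  have e1: "ereal \<epsilon> \<le> ea_bar V \<delta> Vs" by (rule D_feas_le_ea_bar[OF D not_minf])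
  have e2: "ereal er * mu V \<delta> Vs \<le> ereal \<epsilon>"
    using D unfolding D_feas_def tol_def by auto
  have e3: "ea_bar V \<delta> Vs / mu V \<delta> Vs > ereal er"
    using not_closes unfolding closes_def er_bar_def by auto
  show False
  proof (cases "mu V \<delta> Vs")
    case (real m)
    then have m: "m < 0" using neg by simp
    have "ereal (er * m) \<le> ereal \<epsilon>" using e2 real by simp
    then have lower: "ereal (er * m) \<le> ea_bar V \<delta> Vs" using e1 by (rule order_trans)
    have upper: "ea_bar V \<delta> Vs / ereal m > ereal er" using e3 real by simp
    show False
    proof (cases "ea_bar V \<delta> Vs")
      case (real e)
      then have "er * m \<le> e" "e / m > er"
        using lower upper m by (auto simp: divide_ereal_def divide_inverse)
      then show False using m by (simp add: field_simps)
    qed (use lower upper m in \<open>simp_all add: divide_ereal_def\<close>)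
  qed (use neg e2 er in simp_all)
qed

lemma Inf_Vstar_le_mu: "(INF x\<in>convex hull Vs. Vstar V x) \<le> mu V \<delta> Vs"
  unfolding mu_def
proof (rule INF_greatest)
  fix p assume "p \<in> Ppairs V \<delta> Vs"
  then obtain x d where p: "p = (x, d)" "x \<in> convex hull Vs" unfolding Ppairs_def by auto
  have "(INF x\<in>convex hull Vs. Vstar V x) \<le> Vstar V x" using p(2) by (rule INF_lower)
  also have "\<dots> \<le> V d x" by (rule Vstar_le)
  finally show "(INF x\<in>convex hull Vs. Vstar V x) \<le> (case p of (\<theta>, \<delta>') \<Rightarrow> V \<delta>' \<theta>)"
    using p by simp
qed

text \<open>At each point the optimal commutation is either \<open>\<delta>\<close> or another one, so
  \<open>V*\<close> is bounded below by \<open>\<mu>\<close> taken with respect to \<open>\<delta>s\<close> or to \<open>\<delta>\<close>.\<close>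
lemma Inf_Vstar_nonneg:
  assumes mu: "mu V \<delta> Vs \<ge> 0" "mu V \<delta>s Vs \<ge> 0" and "\<delta>s \<noteq> \<delta>"
    and feas: "convex hull Vs \<subseteq> feasset V \<delta>"
  shows "(INF x\<in>convex hull Vs. Vstar V x) \<ge> 0"
proof (rule INF_greatest)
  fix x assume x: "x \<in> convex hull Vs"
  obtain d where d: "Vstar V x = V d x" using Vstar_attained[of V x] by blast
  show "0 \<le> Vstar V x"
  proof (cases "d = \<delta>")
    case True
    have "(x, \<delta>) \<in> Ppairs V \<delta>s Vs" unfolding Ppairs_def using x feas \<open>\<delta>s \<noteq> \<delta>\<close> by auto
    then have "mu V \<delta>s Vs \<le> V \<delta> x" unfolding mu_def by (auto intro: INF_lower2)
    then show ?thesis using mu d True by simp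
  next
    case False
    have "V d x \<le> V \<delta> x" using d Vstar_le[of V x \<delta>] by simp
    also have "\<dots> < \<infinity>" using x feas unfolding feasset_def by auto
    finally have "(x, d) \<in> Ppairs V \<delta> Vs" unfolding Ppairs_def feasset_def using x False by auto
    then have "mu V \<delta> Vs \<le> V d x" unfolding mu_def by (auto intro: INF_lower2)
    then show ?thesis using mu d by simp
  qed
qed

lemma tol_Inf_Vstar_le_tol_mu:
  assumes not_minf: "\<forall>\<delta> \<theta>. V \<delta> \<theta> \<noteq> -\<infinity>"
    and feas: "convex hull Vs \<subseteq> feasset V \<delta>"
    and not_closes: "\<not> closes V ea er \<delta> Vs" "\<not> closes V ea er \<delta>s Vs"
    and D: "D_feas V ea er \<delta> Vs \<theta> \<epsilon> \<delta>s" "D_feas V ea er \<delta>s Vs \<theta>' \<epsilon>' \<delta>t"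
    and pos: "tol ea er (INF x\<in>convex hull Vs. Vstar V x) > 0"
  shows "tol ea er (INF x\<in>convex hull Vs. Vstar V x) \<le> tol ea er (mu V \<delta> Vs)"
proof (cases "er \<ge> 0")
  case True
  then have "ereal er * (INF x\<in>convex hull Vs. Vstar V x) \<le> ereal er * mu V \<delta> Vs"
    using Inf_Vstar_le_mu by (intro ereal_mult_left_mono) auto
  then show ?thesis unfolding tol_def by (rule max.mono[OF order_refl])
next
  case False
  let ?M = "INF x\<in>convex hull Vs. Vstar V x"
  have "mu V \<delta> Vs \<ge> 0" "mu V \<delta>s Vs \<ge> 0"
    using mu_nonneg_if_not_closes[OF _ not_closes(1) D(1)] mu_nonneg_if_not_closes[OF _ not_closes(2) D(2)]
      False not_minf by auto
  moreover have "\<delta>s \<noteq> \<delta>" using D(1) unfolding D_feas_def by simp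
  ultimately have "?M \<ge> 0" using Inf_Vstar_nonneg feas by blast
  then have "ereal er * ?M \<le> 0" using False by (cases ?M) (auto simp: mult_nonneg_nonpos2)
  then have "tol ea er ?M = ereal ea" using pos unfolding tol_def by (auto simp: max_def)
  then show ?thesis unfolding tol_def by simp
qed

lemma small_var_real_bounds:
  assumes ne: "convex hull Vs \<noteq> {}"
    and finite_vals: "\<forall>x\<in>convex hull Vs. \<bar>V \<delta> x\<bar> \<noteq> \<infinity>"
    and small: "small_var V ea er \<delta> Vs"
  obtains A I where "(SUP x\<in>convex hull Vs. V \<delta> x) = ereal A" "(INF x\<in>convex hull Vs. V \<delta> x) = ereal I"
    "I \<le> A" "ereal (A - I) < tol ea er (INF x\<in>convex hull Vs. Vstar V x)"
proof -
  obtain y where y: "y \<in> convex hull Vs" using ne by blast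
  let ?S = "SUP x\<in>convex hull Vs. V \<delta> x" and ?I = "INF x\<in>convex hull Vs. V \<delta> x"
  have lt: "?S - ?I < tol ea er (INF x\<in>convex hull Vs. Vstar V x)"
    using small unfolding small_var_def .
  have SI: "?I \<le> V \<delta> y" "V \<delta> y \<le> ?S" using y by (auto intro: INF_lower SUP_upper)
  have "?S \<noteq> -\<infinity>" "?I \<noteq> \<infinity>" using SI finite_vals y by auto
  moreover from this have "?S \<noteq> \<infinity>" "?I \<noteq> -\<infinity>" using lt by auto
  ultimately obtain A I where AI: "?S = ereal A" "?I = ereal I" by (cases ?S; cases ?I) auto
  moreover have "I \<le> A" using SI AI by (metis ereal_less_eq(3) order_trans)
  ultimately show ?thesis using that lt by auto
qed

definition replaces_head ::
  "('d::finite \<Rightarrow> 'p::real_normed_vector \<Rightarrow> ereal) \<Rightarrow> real \<Rightarrow> real \<Rightarrow>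
   ('p, 'd) leaf list \<Rightarrow> ('p, 'd) leaf list \<Rightarrow> bool" where
  "replaces_head V ea er L L' \<longleftrightarrow>
     (\<exists>Vs \<delta> rest \<theta> \<epsilon> \<delta>s. L = (Vs, \<delta>) # rest \<and> \<not> closes V ea er \<delta> Vs \<and>
        D_feas V ea er \<delta> Vs \<theta> \<epsilon> \<delta>s \<and> small_var V ea er \<delta> Vs \<and> L' = (Vs, \<delta>s) # rest)"

lemma replaces_head_same_simplex: "replaces_head V ea er L L' \<Longrightarrow> fst (hd L') = fst (hd L)"
  unfolding replaces_head_def by auto

text \<open>The maximizer \<open>\<theta>\<close> of \<open>D\<close> lies at least \<open>\<epsilon>\<close> below the interpolant of \<open>V*_\<delta>\<close>,
  hence below \<open>max V*_\<delta> - \<epsilon>\<close>; the variation test for the new commutation then keeps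
  all of \<open>V*_\<delta>s\<close> within less than \<open>\<epsilon>\<close> of that value.\<close>
lemma replaces_head_twice_Sup_less:
  fixes V :: "'d::finite \<Rightarrow> 'p::real_normed_vector \<Rightarrow> ereal"
  assumes not_minf: "\<forall>\<delta> \<theta>. V \<delta> \<theta> \<noteq> -\<infinity>"
    and fin: "finite Vs" and ind: "\<not> affine_dependent Vs" and ne: "Vs \<noteq> {}"
    and feas: "convex hull Vs \<subseteq> feasset V \<delta>"
    and first: "replaces_head V ea er ((Vs, \<delta>) # rest) L'"
    and second: "replaces_head V ea er L' L''"
  shows "(SUP x\<in>convex hull Vs. V (snd (hd L')) x) < (SUP x\<in>convex hull Vs. V \<delta> x)"
proof -
  let ?H = "convex hull Vs" and ?M = "INF x\<in>convex hull Vs. Vstar V x"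
  obtain \<theta> \<epsilon> \<delta>s where L': "L' = (Vs, \<delta>s) # rest" and nc1: "\<not> closes V ea er \<delta> Vs"
    and D1: "D_feas V ea er \<delta> Vs \<theta> \<epsilon> \<delta>s" and small1: "small_var V ea er \<delta> Vs"
    using first unfolding replaces_head_def by blast
  obtain \<theta>' \<epsilon>' \<delta>t where nc2: "\<not> closes V ea er \<delta>s Vs"
    and D2: "D_feas V ea er \<delta>s Vs \<theta>' \<epsilon>' \<delta>t" and small2: "small_var V ea er \<delta>s Vs"
    using second unfolding replaces_head_def L' by blast
  have \<theta>: "\<theta> \<in> ?H" and feas_s: "?H \<subseteq> feasset V \<delta>s"
    and below: "V \<delta>s \<theta> \<le> Vbar V \<delta> Vs \<theta> - ereal \<epsilon>" and eps: "tol ea er (mu V \<delta> Vs) \<le> ereal \<epsilon>"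
    using D1 unfolding D_feas_def by auto
  have "?H \<noteq> {}" using ne by simp
  moreover have "\<forall>x\<in>?H. \<bar>V \<delta> x\<bar> \<noteq> \<infinity>" "\<forall>x\<in>?H. \<bar>V \<delta>s x\<bar> \<noteq> \<infinity>"
    using feas feas_s not_minf unfolding feasset_def by auto
  ultimately obtain A B I where A: "(SUP x\<in>?H. V \<delta> x) = ereal A"
    and B: "(SUP x\<in>?H. V \<delta>s x) = ereal B" and I: "(INF x\<in>?H. V \<delta>s x) = ereal I"
    and "I \<le> B" and var: "ereal (B - I) < tol ea er ?M"
    using small_var_real_bounds[OF _ _ small1] small_var_real_bounds[OF _ _ small2] by metis
  have "tol ea er ?M > 0" using \<open>I \<le> B\<close> var by (metis diff_ge_0_iff_ge ereal_less_eq(3) zero_ereal_def le_less_trans)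
  then have "ereal (B - I) < ereal \<epsilon>"
    using var eps tol_Inf_Vstar_le_tol_mu[OF not_minf feas nc1 nc2 D1 D2] by (meson less_le_trans order_trans)
  moreover have "Vbar V \<delta> Vs \<theta> \<le> ereal A"
    using Vbar_le_vertex_bound[OF fin ind \<theta>] A hull_subset[of Vs convex] by (metis SUP_upper subsetD)
  then have "V \<delta>s \<theta> \<le> ereal (A - \<epsilon>)"
    using below by (metis ereal_minus(1) ereal_minus_mono order_refl order_trans)
  then have "ereal I \<le> ereal (A - \<epsilon>)" using I INF_lower[OF \<theta>, of "V \<delta>s"] by (metis order_trans)
  ultimately have "B < A" by simp
  then show ?thesis using A B L' by simp
qed

section \<open>Runs of the algorithm\<close>

definition valid_leaf :: "'p::euclidean_space set \<Rightarrow> ('d \<Rightarrow> 'p \<Rightarrow> ereal) \<Rightarrow> ('p, 'd) leaf \<Rightarrow> bool" where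
  "valid_leaf \<Theta> V l \<longleftrightarrow> finite (fst l) \<and> fst l \<noteq> {} \<and> \<not> affine_dependent (fst l) \<and>
      convex hull (fst l) \<subseteq> \<Theta> \<and> convex hull (fst l) \<subseteq> feasset V (snd l)"

definition valid_stack :: "'p::euclidean_space set \<Rightarrow> ('d \<Rightarrow> 'p \<Rightarrow> ereal) \<Rightarrow> ('p, 'd) leaf list \<Rightarrow> bool" where
  "valid_stack \<Theta> V L \<longleftrightarrow> (\<forall>l\<in>set L. valid_leaf \<Theta> V l)"

lemma valid_stack_init:
  fixes V :: "'d \<Rightarrow> 'p::euclidean_space \<Rightarrow> ereal"
  assumes "init_ok V \<Theta> L"
  shows "valid_stack \<Theta> V L"
  unfolding valid_stack_def
proof
  fix l assume l: "l \<in> set L"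
  obtain Vs d where l_eq: "l = (Vs, d)" by (cases l)
  have "\<not> affine_dependent Vs" "card Vs = DIM('p) + 1" "convex hull Vs \<subseteq> feasset V d"
      "convex hull Vs \<subseteq> \<Theta>"
    using assms l l_eq unfolding init_ok_def by auto
  moreover from this have "finite Vs" "Vs \<noteq> {}" using card_gt_0_iff by fastforce+
  ultimately show "valid_leaf \<Theta> V l" unfolding valid_leaf_def l_eq by simp
qed

lemma valid_leaf_split1:
  assumes "valid_leaf \<Theta> V (Vs, \<delta>)" "a \<in> Vs" "b \<in> Vs" "convex hull Vs \<subseteq> feasset V d"
  shows "valid_leaf \<Theta> V (split1 Vs a b, d)"
  using assms convex_hull_split1_subset[of a Vs b] affine_independent_split1[of Vs a b]
  unfolding valid_leaf_def split1_eq_midpoint by auto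

lemma alg_step_cases:
  assumes "alg_step V ea er L L'"
  obtains (close) Vs \<delta> rest where "L = (Vs, \<delta>) # rest" "L' = rest"
  | (replace) "replaces_head V ea er L L'"
  | (split) Vs \<delta> rest a b d where "L = (Vs, \<delta>) # rest" "split_ok Vs a b"
      "push_children Vs a b d rest L'" "d = \<delta> \<or> convex hull Vs \<subseteq> feasset V d"
  using assms unfolding alg_step_def
proof (elim exE conjE disjE)
  fix Vs \<delta> rest \<theta> \<epsilon> \<delta>s
  assume L: "L = (Vs, \<delta>) # rest" and nc: "\<not> closes V ea er \<delta> Vs"
    and max: "D_max V ea er \<delta> Vs \<theta> \<epsilon> \<delta>s"
    and next_L: "if small_var V ea er \<delta> Vs then L' = (Vs, \<delta>s) # rest
      else \<exists>a b. split_ok Vs a b \<and> push_children Vs a b \<delta>s rest L'"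
  have D: "D_feas V ea er \<delta> Vs \<theta> \<epsilon> \<delta>s" using max unfolding D_max_def by simp
  show thesis
  proof (cases "small_var V ea er \<delta> Vs")
    case True
    then show thesis using replace L nc D next_L unfolding replaces_head_def by auto
  next
    case False
    then show thesis using split[OF L] D next_L unfolding D_feas_def by auto
  qed
qed blast+

lemma valid_stack_step:
  fixes V :: "'d::finite \<Rightarrow> 'p::euclidean_space \<Rightarrow> ereal"
  assumes valid: "valid_stack \<Theta> V L" and step: "alg_step V ea er L L'"
  shows "valid_stack \<Theta> V L'"
  using step
proof (cases rule: alg_step_cases)
  case close
  then show ?thesis using valid unfolding valid_stack_def by simp
next
  case replace
  then obtain Vs \<delta> rest \<theta> \<epsilon> \<delta>s where "L = (Vs, \<delta>) # rest" "L' = (Vs, \<delta>s) # rest"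
    "D_feas V ea er \<delta> Vs \<theta> \<epsilon> \<delta>s"
    unfolding replaces_head_def by blast
  then show ?thesis using valid unfolding valid_stack_def valid_leaf_def D_feas_def by auto
next
  case (split Vs \<delta> rest a b d)
  have leaf: "valid_leaf \<Theta> V (Vs, \<delta>)" using valid split(1) unfolding valid_stack_def by simp
  then have feas: "convex hull Vs \<subseteq> feasset V d" using split(4) unfolding valid_leaf_def by auto
  have "a \<in> Vs" "b \<in> Vs" using split(2) unfolding split_ok_def by auto
  then have "valid_leaf \<Theta> V (split1 Vs a b, d)" "valid_leaf \<Theta> V (split2 Vs a b, d)"
    unfolding split2_eq_split1 using valid_leaf_split1[OF leaf _ _ feas] by auto
  then show ?thesis using split(1,3) valid unfolding push_children_def valid_stack_def by auto
qed

definition stack_potential :: "real \<Rightarrow> nat \<Rightarrow> ('a::metric_space, 'd) leaf list \<Rightarrow> nat" where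
  "stack_potential c k L = (\<Sum>l\<leftarrow>L. 3 ^ potential_rank c k (fst l))"

lemma stack_potential_replaces_head:
  "replaces_head V ea er L L' \<Longrightarrow> stack_potential c k L' = stack_potential c k L"
  unfolding replaces_head_def stack_potential_def by auto

lemma stack_potential_step:
  fixes V :: "'d::finite \<Rightarrow> 'p::euclidean_space \<Rightarrow> ereal"
  assumes valid: "valid_stack \<Theta> V L" and step: "alg_step V ea er L L'"
    and long: "\<And>a b. split_ok (fst (hd L)) a b \<Longrightarrow> \<psi> < dist a b"
    and \<psi>: "\<psi> > 0" and k: "k \<ge> 1" and k_large: "real DIM('p) * (3/4) ^ k \<le> 1/2"
  shows "stack_potential (\<psi> ^ (2 * k)) k L' < stack_potential (\<psi> ^ (2 * k)) k L
    \<or> replaces_head V ea er L L'"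
  using step
proof (cases rule: alg_step_cases)
  case close
  then show ?thesis unfolding stack_potential_def by simp
next
  case replace
  then show ?thesis by simp
next
  case (split Vs \<delta> rest a b d)
  let ?r = "potential_rank (\<psi> ^ (2 * k)) k"
  have leaf: "finite Vs" "\<not> affine_dependent Vs"
    using valid split(1) unfolding valid_stack_def valid_leaf_def by auto
  have "\<psi> < dist a b" using long split(1,2) by simp
  then have "?r (split1 Vs a b) < ?r Vs" "?r (split2 Vs a b) < ?r Vs"
    unfolding split2_eq_split1 using split(2) split_ok_commute[OF split(2)] dist_commute[of a b]
    by (auto intro: potential_rank_split_less[OF leaf _ _ \<psi> k k_large])
  then have "3 ^ ?r (split1 Vs a b) + 3 ^ ?r (split2 Vs a b) < (3::nat) ^ ?r Vs"
    by (rule three_power_add_less)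
  then show ?thesis
    using split(1,3) unfolding push_children_def stack_potential_def by auto
qed

lemma nat_antimono_eventually_const:
  fixes u :: "nat \<Rightarrow> nat"
  assumes "\<And>j. u (Suc j) \<le> u j"
  obtains K where "\<And>j. K \<le> j \<Longrightarrow> u j = u K"
proof -
  obtain K where min: "\<And>j. u K \<le> u j" using ex_has_least_nat[of "\<lambda>_. True" 0 u] by auto
  have "u j = u K" if "K \<le> j" for j
    using lift_Suc_antimono_le[of u, OF assms that] min[of j] by simp
  then show thesis by (rule that)
qed

lemma finite_range_not_strictly_decreasing:
  fixes h :: "nat \<Rightarrow> 'a::linorder"
  assumes "finite (range h)"
  shows "\<exists>i. \<not> h (Suc i) < h i"
proof -
  obtain i where "h i = Min (range h)" using Min_in[OF assms] by auto
  then have "h i \<le> h (Suc i)" using Min_le[OF assms] by simp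
  then show ?thesis by (auto simp: not_less)
qed

lemma run_valid:
  fixes V :: "'d::finite \<Rightarrow> 'p::euclidean_space \<Rightarrow> ereal"
  assumes "init_ok V \<Theta> (s 0)" and "\<forall>k. alg_step V ea er (s k) (s (Suc k))"
  shows "valid_stack \<Theta> V (s j)"
  by (induction j) (use assms valid_stack_init valid_stack_step in blast)+

lemma run_eventually_replaces_head:
  fixes V :: "'d::finite \<Rightarrow> 'p::euclidean_space \<Rightarrow> ereal"
  assumes valid: "\<And>j. valid_stack \<Theta> V (s j)" and step: "\<And>j. alg_step V ea er (s j) (s (Suc j))"
    and long: "\<And>j a b. split_ok (fst (hd (s j))) a b \<Longrightarrow> \<psi> < dist a b" and \<psi>: "\<psi> > 0"
  obtains K where "\<And>j. K \<le> j \<Longrightarrow> replaces_head V ea er (s j) (s (Suc j))"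
proof -
  obtain k where k: "k \<ge> 1" "real DIM('p) * (3/4) ^ k \<le> 1/2"
    using exists_split_exponent by blast
  define u where "u j = stack_potential (\<psi> ^ (2 * k)) k (s j)" for j
  have dichotomy: "u (Suc j) < u j \<or> replaces_head V ea er (s j) (s (Suc j))" for j
    unfolding u_def using stack_potential_step[OF valid[of j] step[of j] long[of j] \<psi> k] by blast
  have "u (Suc j) \<le> u j" for j
    using dichotomy[of j] stack_potential_replaces_head unfolding u_def by (metis order_refl less_imp_le)
  then obtain K where "\<And>j. K \<le> j \<Longrightarrow> u j = u K" using nat_antimono_eventually_const by metis
  then have "replaces_head V ea er (s j) (s (Suc j))" if "K \<le> j" for j
    using dichotomy[of j] that by (metis le_SucI less_irrefl)
  then show thesis using that by blast
qed

text \<open>The simplex stays fixed, so the maximum of the current \<open>V*_\<delta>\<close> over it takes only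
  finitely many values, yet each replacement lowers it strictly.\<close>
lemma run_not_always_replaces_head:
  fixes V :: "'d::finite \<Rightarrow> 'p::euclidean_space \<Rightarrow> ereal"
  assumes not_minf: "\<forall>\<delta> \<theta>. V \<delta> \<theta> \<noteq> -\<infinity>" and valid: "\<And>j. valid_stack \<Theta> V (s j)"
    and replace: "\<And>j. K \<le> j \<Longrightarrow> replaces_head V ea er (s j) (s (Suc j))"
  shows False
proof -
  define S where "S = fst (hd (s K))"
  have same: "fst (hd (s (K + i))) = S" for i
  proof (induction i)
    case (Suc i)
    then show ?case using replaces_head_same_simplex[OF replace[of "K + i"]] by simp
  qed (simp add: S_def)
  define g where "g i = (SUP x\<in>convex hull S. V (snd (hd (s (K + i)))) x)" for i
  have "g (Suc i) < g i" for i
  proof -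
    obtain \<delta> rest where s_eq: "s (K + i) = (S, \<delta>) # rest"
      using replace[of "K + i"] same[of i] unfolding replaces_head_def by auto
    have "valid_leaf \<Theta> V (S, \<delta>)" using valid[of "K + i"] s_eq unfolding valid_stack_def by simp
    then have "finite S" "\<not> affine_dependent S" "S \<noteq> {}" "convex hull S \<subseteq> feasset V \<delta>"
      unfolding valid_leaf_def by auto
    from replaces_head_twice_Sup_less[OF not_minf this] show ?thesis
      using replace[of "K + i"] replace[of "Suc (K + i)"] s_eq unfolding g_def by simp
  qed
  moreover have "finite (range g)"
    by (rule finite_subset[of _ "(\<lambda>d. SUP x\<in>convex hull S. V d x) ` UNIV"]) (auto simp: g_def)
  ultimately show False using finite_range_not_strictly_decreasing by blast
qed

lemma variability_pos:
  assumes "\<sigma> > 0" "var_prop V ea er \<delta> \<sigma>"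
  shows "variability V ea er \<delta> > 0"
proof -
  have "ereal \<sigma> \<le> variability V ea er \<delta>"
    unfolding variability_def by (rule Sup_upper) (use assms in blast)
  then show ?thesis using assms(1) by (simp add: order.strict_trans2[rotated])
qed

lemma condnum_pos:
  fixes V :: "'d::finite \<Rightarrow> 'p::euclidean_space \<Rightarrow> ereal"
  assumes overlap: "overlap V ea er \<Theta> > 0"
    and var: "\<forall>\<delta>\<in>Delta V \<Theta>. \<exists>\<sigma>>0. var_prop V ea er \<delta> \<sigma>"
  shows "condnum V ea er \<Theta> > 0"
proof -
  have "\<forall>x\<in>variability V ea er ` Delta V \<Theta>. 0 < x" using var variability_pos by blast
  then have "(INF \<delta>\<in>Delta V \<Theta>. variability V ea er \<delta>) > 0"
    by (cases "Delta V \<Theta> = {}") (simp_all add: top_ereal_def finite_less_Inf_iff)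
  then show ?thesis using overlap unfolding condnum_def by simp
qed

lemma run_reaches_small_simplex:
  fixes V :: "'d::finite \<Rightarrow> 'p::euclidean_space \<Rightarrow> ereal"
    and s :: "nat \<Rightarrow> ('p, 'd) leaf list"
  assumes not_minf: "\<forall>\<delta> \<theta>. V \<delta> \<theta> \<noteq> -\<infinity>"
    and \<psi>_pos: "condnum V ea er \<Theta> > 0"
    and init: "init_ok V \<Theta> (s 0)"
    and step: "\<forall>k. alg_step V ea er (s k) (s (Suc k))"
  shows "\<exists>k \<theta>o. \<theta>o \<in> \<Theta> \<and> convex hull (fst (hd (s k))) \<subseteq> ecball \<theta>o (condnum V ea er \<Theta>)"
proof (rule ccontr)
  assume none: "\<not> ?thesis"
  obtain \<psi> where \<psi>: "\<psi> > 0" "ereal \<psi> \<le> condnum V ea er \<Theta>"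
    using \<psi>_pos by (cases "condnum V ea er \<Theta>") (auto intro: that[of 1])
  have valid: "valid_stack \<Theta> V (s j)" for j using run_valid[OF init step] .
  have long: "\<psi> < dist a b" if split: "split_ok (fst (hd (s j))) a b" for j a b
  proof (rule ccontr)
    assume "\<not> \<psi> < dist a b"
    then have "ereal (dist a x) \<le> condnum V ea er \<Theta>" if "x \<in> cball a (dist a b)" for x
      using that order_trans[OF _ \<psi>(2)] by (simp add: mem_cball)
    then have "cball a (dist a b) \<subseteq> ecball a (condnum V ea er \<Theta>)"
      unfolding ecball_def by blast
    moreover have "a \<in> \<Theta>"
    proof -
      obtain Vs \<delta> rest where "s j = (Vs, \<delta>) # rest" using step unfolding alg_step_def by blast
      then show ?thesis using valid[of j] split hull_subset[of Vs convex]
        unfolding valid_stack_def valid_leaf_def split_ok_def by auto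
    qed
    ultimately show False
      using none convex_hull_subset_cball_split_ok[OF split] by blast
  qed
  obtain K where "\<And>j. K \<le> j \<Longrightarrow> replaces_head V ea er (s j) (s (Suc j))"
    using run_eventually_replaces_head[where \<Theta> = \<Theta> and V = V and s = s and \<psi> = \<psi>]
      valid step long \<psi>(1) by blast
  then show False using run_not_always_replaces_head[where s = s, OF not_minf valid] by blast
qed

theorem lemma4:
  fixes f :: "'p::euclidean_space \<Rightarrow> 'x::euclidean_space \<Rightarrow> ('m::finite \<Rightarrow> bool) \<Rightarrow> real"
    and g :: "'p \<Rightarrow> 'x \<Rightarrow> ('m \<Rightarrow> bool) \<Rightarrow> 'l::euclidean_space"
    and h :: "'p \<Rightarrow> 'x \<Rightarrow> ('m \<Rightarrow> bool) \<Rightarrow> 'k::euclidean_space"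
    and K :: "'k set"
    and \<Theta> :: "'p set"
    and ea er :: real
    and s :: "nat \<Rightarrow> ('p, 'm \<Rightarrow> bool) leaf list"
  assumes cone: "convex_cone K"
    and f_convex: "\<forall>\<delta>. convex_on UNIV (\<lambda>z. f (fst z) (snd z) \<delta>)"
    and g_affine: "\<forall>\<delta>. affine_map (\<lambda>z. g (fst z) (snd z) \<delta>)"
    and h_affine: "\<forall>\<delta>. affine_map (\<lambda>z. h (fst z) (snd z) \<delta>)"
    and V_not_minf: "\<forall>\<delta> \<theta>. Vopt f g h K \<delta> \<theta> \<noteq> -\<infinity>"
    and Theta_sub: "\<Theta> \<subseteq> (\<Union>\<delta>. feasset (Vopt f g h K) \<delta>)"
    and Theta_polytope: "polytope \<Theta>" "convex \<Theta>"
    and Theta_full: "interior \<Theta> \<noteq> {}"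
    and var_exists: "\<forall>\<delta>\<in>Delta (Vopt f g h K) \<Theta>. \<exists>\<sigma>>0. var_prop (Vopt f g h K) ea er \<delta> \<sigma>"
    and overlap_pos: "overlap (Vopt f g h K) ea er \<Theta> > 0"
    and run_init: "init_ok (Vopt f g h K) \<Theta> (s 0)"
    and run_step: "\<forall>k. alg_step (Vopt f g h K) ea er (s k) (s (Suc k))"
  shows "\<exists>k \<theta>o. \<theta>o \<in> \<Theta> \<and>
           convex hull (fst (hd (s k))) \<subseteq> ecball \<theta>o (condnum (Vopt f g h K) ea er \<Theta>)"
proof -
  have "condnum (Vopt f g h K) ea er \<Theta> > 0" using condnum_pos[OF overlap_pos var_exists] .
  then show ?thesis using run_reaches_small_simplex[OF V_not_minf _ run_init run_step] by blast
qed

end
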